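(* Let $D \in \mathbb{R}^{m \times n}$, let $Q \in \mathbb{Z}^{m\times n}$ be such that for each $j$ the $j$th column of $Q$ stores the sorting of the $j$th column of $D$, let $(a_1,\ldots,a_p)$ be a sequence of column indices of $D$, let $L$ be the ranking vector of the lexicographical sorting of the sub-matrix of $D$ determined by the sequence of columns $(a_1,\ldots,a_p)$, and let $i \in \{0,\ldots,n-1\}$. Then QuickLexSortRefine$(D,Q,i,L)$ returns the ranking vector $L'$ of the lexicographical sorting of the sub-matrix of $D$ determined by the sequence of columns $(a_1,\ldots,a_p,i)$.
   Context: Rows of $D$ are indexed by $\{0,\ldots,m-1\}$, columns by $\{0,\ldots,n-1\}$. "The $j$th column of $Q$ stores the sorting of the $j$th column of $D$" means $(Q_{0j},\ldots,Q_{m-1,j})$ is a permutation of $\{0,\ldots,m-1\}$ with $D_{Q_{0j},j} \le D_{Q_{1j},j} \le \cdots \le D_{Q_{m-1,j},j}$. For a sequence of columns $(b_1,\ldots,b_q)$, the sub-matrix determined by it has row $r$ equal to $(D_{r b_1},\ldots,D_{r b_q})$, and its rows are compared in lexicographic order: $v <_{\mathrm{lex}} w$ iff $v_1<w_1$, or $v_1=w_1,\ldots,v_k=w_k$ and $v_{k+1}<w_{k+1}$ for some $k$. The ranking vector of this ordering is the unique $L \in \{0,\ldots,m-1\}^m$ such that equal rows $r,s$ have $L_r = L_s$, rows with row $r$ lexicographically smaller than row $s$ have $L_r < L_s$, and $\sum_r L_r$ is minimal (equivalently, $L_r$ is the number of distinct rows of the sub-matrix that are lexicographically smaller than row $r$).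 For the empty sequence the ranking vector is the zero vector. QuickLexSortRefine$(D,Q,i,L)$ is the following procedure. Initialize integer arrays $\mathrm{IDval},\mathrm{IDvalInit},\mathrm{subID},\mathrm{newCount},\mathrm{numNewID}$ of length $m$ to zero. For $j=0,\ldots,m-1$: let $r := Q[j,i]$ and $\ell := L[r]$; if $\mathrm{IDvalInit}[\ell]=0$, set $\mathrm{IDvalInit}[\ell]:=1$ and $\mathrm{IDval}[\ell]:=D[r,i]$; otherwise, if $\mathrm{IDval}[\ell]\neq D[r,i]$, set $\mathrm{IDval}[\ell]:=D[r,i]$ and $\mathrm{newCount}[\ell]:=\mathrm{newCount}[\ell]+1$; in all cases then set $\mathrm{subID}[r]:=\mathrm{newCount}[\ell]$. Next set $\mathrm{numNewID}[m-1]:=\sum_{j=0}^{m-2}\mathrm{newCount}[j]$ and, for $j=m-2,m-3,\ldots,1$, $\mathrm{numNewID}[j]:=\mathrm{numNewID}[j+1]-\mathrm{newCount}[j]$ ($\mathrm{numNewID}[0]$ stays $0$). Finally, for $j=0,\ldots,m-1$ set $L'[j]:=L[j]+\mathrm{numNewID}[L[j]]+\mathrm{subID}[j]$, and return $L'$. *)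

theory Defs
  imports Main "HOL.Real"
begin

text \<open>Matrices are functions indexed by row and column: D r c is the entry in row r,
  column c. Only indices r < m, c < n are meaningful.\<close>

definition sub_row :: "(nat \<Rightarrow> nat \<Rightarrow> real) \<Rightarrow> nat list \<Rightarrow> nat \<Rightarrow> real list" where
  "sub_row D bs r = map (\<lambda>b. D r b) bs"

definition lex_less :: "real list \<Rightarrow> real list \<Rightarrow> bool" where
  "lex_less v w \<longleftrightarrow> (\<exists>k. k < length v \<and> k < length w \<and> take k v = take k w \<and> v ! k < w ! k)"

definition ranking :: "(nat \<Rightarrow> nat \<Rightarrow> real) \<Rightarrow> nat \<Rightarrow> nat list \<Rightarrow> nat \<Rightarrow> nat" where
  "ranking D m bs r = card {sub_row D bs s | s. s < m \<and> lex_less (sub_row D bs s) (sub_row D bs r)}"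

definition sorts_columns :: "(nat \<Rightarrow> nat \<Rightarrow> real) \<Rightarrow> (nat \<Rightarrow> nat \<Rightarrow> nat) \<Rightarrow> nat \<Rightarrow> nat \<Rightarrow> bool" where
  "sorts_columns D Q m n \<longleftrightarrow> (\<forall>j<n. bij_betw (\<lambda>k. Q k j) {..<m} {..<m} \<and>
       (\<forall>k. Suc k < m \<longrightarrow> D (Q k j) j \<le> D (Q (Suc k) j) j))"

text \<open>One iteration of the first loop; state = (IDval, IDvalInit, newCount, subID).\<close>
definition qlsr_step ::
  "(nat \<Rightarrow> nat \<Rightarrow> real) \<Rightarrow> (nat \<Rightarrow> nat \<Rightarrow> nat) \<Rightarrow> nat \<Rightarrow> (nat \<Rightarrow> nat) \<Rightarrow> nat \<Rightarrow>
   (nat \<Rightarrow> real) \<times> (nat \<Rightarrow> nat) \<times> (nat \<Rightarrow> nat) \<times> (nat \<Rightarrow> nat) \<Rightarrow>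
   (nat \<Rightarrow> real) \<times> (nat \<Rightarrow> nat) \<times> (nat \<Rightarrow> nat) \<times> (nat \<Rightarrow> nat)" where
  "qlsr_step D Q i L j st =
     (case st of (idval, init, nc, sub) \<Rightarrow>
       let r = Q j i; l = L r in
       if init l = 0 then (idval(l := D r i), init(l := 1), nc, sub(r := nc l))
       else if idval l \<noteq> D r i then
         (let nc' = nc(l := nc l + 1) in (idval(l := D r i), init, nc', sub(r := nc' l)))
       else (idval, init, nc, sub(r := nc l)))"

definition quick_lex_sort_refine ::
  "(nat \<Rightarrow> nat \<Rightarrow> real) \<Rightarrow> (nat \<Rightarrow> nat \<Rightarrow> nat) \<Rightarrow> nat \<Rightarrow> nat \<Rightarrow> (nat \<Rightarrow> nat) \<Rightarrow> (nat \<Rightarrow> nat)" where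
  "quick_lex_sort_refine D Q m i L =
     (case fold (qlsr_step D Q i L) [0..<m] (\<lambda>_. 0, \<lambda>_. 0, \<lambda>_. 0, \<lambda>_. 0) of
       (idval, init, nc, sub) \<Rightarrow>
         let nn0 = (\<lambda>_. 0)(m - 1 := (\<Sum>j<m - 1. nc j));
             nn = fold (\<lambda>j nn. nn(j := nn (j + 1) - nc j)) (rev [1..<m - 1]) nn0
         in (\<lambda>j. L j + nn (L j) + sub j))"

end

theory Submission
  imports Defs "HOL-Library.List_Lexorder"
begin

text \<open>Rows with equal L form the classes of equal sub-rows, and L orders the classes. Appending
  column i refines every class by its values in column i, so the new rank of row r is L r, plus
  the number of distinct values minus one of every class below that of r, plus the number of
  values in the class of r that are smaller than D r i. Scanning the rows in increasing order of
  column i meets the values of each class in increasing order: newCount counts the value changes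
  within a class, subID r the changes met before r, and numNewID accumulates newCount over the
  lower classes.\<close>

section \<open>Ranks in a linearly ordered finite set\<close>

lemma card_less_strict_mono:
  fixes V :: "'a::linorder set"
  assumes "finite V" "x \<in> V" "x < y"
  shows "card {z \<in> V. z < x} < card {z \<in> V. z < y}"
  using assms by (intro psubset_card_mono) auto

lemma card_less_less_iff:
  fixes V :: "'a::linorder set"
  assumes "finite V" "x \<in> V" "y \<in> V"
  shows "card {z \<in> V. z < x} < card {z \<in> V. z < y} \<longleftrightarrow> x < y"
  using card_less_strict_mono[OF assms(1,2), of y] card_less_strict_mono[OF assms(1,3), of x]
  by (cases x y rule: linorder_cases) auto

lemma card_less_eq_iff:
  fixes V :: "'a::linorder set"
  assumes "finite V" "x \<in> V" "y \<in> V"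
  shows "card {z \<in> V. z < x} = card {z \<in> V. z < y} \<longleftrightarrow> x = y"
  using card_less_strict_mono[OF assms(1,2), of y] card_less_strict_mono[OF assms(1,3), of x]
  by (cases x y rule: linorder_cases) auto

lemma card_less_less_card:
  fixes V :: "'a::linorder set"
  assumes "finite V" "x \<in> V"
  shows "card {z \<in> V. z < x} < card V"
  using assms by (intro psubset_card_mono) auto

lemma image_card_less:
  fixes V :: "'a::linorder set"
  assumes "finite V" "x \<in> V"
  shows "(\<lambda>y. card {z \<in> V. z < y}) ` {y \<in> V. y < x} = {..<card {z \<in> V. z < x}}"
proof -
  let ?rk = "\<lambda>y. card {z \<in> V. z < y}"
  have "inj_on ?rk V"
    using card_less_eq_iff[OF assms(1)] by (intro inj_onI) blast
  then have "card (?rk ` {y \<in> V. y < x}) = ?rk x"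
    by (intro card_image) (auto intro: inj_on_subset)
  moreover have "?rk ` {y \<in> V. y < x} \<subseteq> {..<?rk x}"
    using card_less_strict_mono[OF assms(1)] by auto
  ultimately show ?thesis
    by (intro card_subset_eq) auto
qed

lemma card_image_eq_if_same_kernel:
  assumes "\<And>s s'. s \<in> T \<Longrightarrow> s' \<in> T \<Longrightarrow> f s = f s' \<longleftrightarrow> g s = g s'"
  shows "card (f ` T) = card (g ` T)"
proof -
  let ?h = "\<lambda>y. g (inv_into T f y)"
  have h: "?h (f s) = g s" if "s \<in> T" for s
    using assms that by (metis f_inv_into_f imageI inv_into_into)
  have "inj_on ?h (f ` T)"
  proof (rule inj_onI)
    fix p q assume "p \<in> f ` T" "q \<in> f ` T" "?h p = ?h q"
    then show "p = q"
      using assms h by auto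
  qed
  moreover have "?h ` f ` T = g ` T"
    using h by (simp add: image_image cong: image_cong)
  ultimately show ?thesis
    by (metis card_image)
qed

section \<open>Ranking vectors\<close>

lemma lex_less_iff_less:
  fixes v w :: "real list"
  assumes "length v = length w"
  shows "lex_less v w \<longleftrightarrow> v < w"
  using assms unfolding lex_less_def list_less_def lexord_take_index_conv by auto

lemma snoc_less_snoc_iff:
  fixes v w :: "'a::linorder list"
  assumes "length v = length w"
  shows "v @ [a] < w @ [b] \<longleftrightarrow> v < w \<or> (v = w \<and> a < b)"
  using assms by (induction v w rule: list_induct2) auto

lemma length_sub_row [simp]: "length (sub_row D bs r) = length bs"
  by (simp add: sub_row_def)

lemma ranking_eq_card_less:
  "ranking D m bs r = card {u \<in> sub_row D bs ` {..<m}. u < sub_row D bs r}"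
proof -
  have "{sub_row D bs s |s. s < m \<and> lex_less (sub_row D bs s) (sub_row D bs r)}
      = {u \<in> sub_row D bs ` {..<m}. u < sub_row D bs r}"
    by (auto simp: lex_less_iff_less)
  then show ?thesis
    unfolding ranking_def by simp
qed

lemma ranking_less_iff:
  assumes "r < m" "s < m"
  shows "ranking D m bs s < ranking D m bs r \<longleftrightarrow> sub_row D bs s < sub_row D bs r"
  using assms by (simp add: ranking_eq_card_less card_less_less_iff)

lemma ranking_eq_iff:
  assumes "r < m" "s < m"
  shows "ranking D m bs s = ranking D m bs r \<longleftrightarrow> sub_row D bs s = sub_row D bs r"
  using assms by (simp add: ranking_eq_card_less card_less_eq_iff)

lemma ranking_less:
  assumes "r < m"
  shows "ranking D m bs r < m"
proof -
  have "ranking D m bs r < card (sub_row D bs ` {..<m})"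
    using assms by (simp add: ranking_eq_card_less card_less_less_card)
  also have "\<dots> \<le> m"
    using card_image_le[of "{..<m}"] by simp
  finally show ?thesis .
qed

lemma ex_ranking_eq_if_less:
  assumes "r < m" "l < ranking D m bs r"
  obtains s where "s < m" "ranking D m bs s = l"
proof -
  let ?V = "sub_row D bs ` {..<m}"
  have "l \<in> (\<lambda>u. card {z \<in> ?V. z < u}) ` {u \<in> ?V. u < sub_row D bs r}"
    using assms image_card_less[of ?V "sub_row D bs r"] by (simp add: ranking_eq_card_less)
  then show ?thesis
    using that by (auto simp: ranking_eq_card_less)
qed

definition class_values ::
  "(nat \<Rightarrow> nat \<Rightarrow> real) \<Rightarrow> nat \<Rightarrow> (nat \<Rightarrow> nat) \<Rightarrow> nat set \<Rightarrow> nat \<Rightarrow> real set" where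
  "class_values D c L A l = (\<lambda>s. D s c) ` {s \<in> A. L s = l}"

lemma finite_class_values [simp]: "finite A \<Longrightarrow> finite (class_values D c L A l)"
  by (simp add: class_values_def)

lemma class_values_insert:
  "class_values D c L (insert r A)
     = (class_values D c L A)(L r := insert (D r c) (class_values D c L A (L r)))"
  by (rule ext) (auto simp: class_values_def)

lemma card_lex_pairs_below:
  assumes "finite A"
  shows "card {(L s, D s c) |s. s \<in> A \<and> (L s < l \<or> L s = l \<and> D s c < y)}
       = (\<Sum>k<l. card (class_values D c L A k)) + card {z \<in> class_values D c L A l. z < y}"
proof -
  have "{(L s, D s c) |s. s \<in> A \<and> (L s < l \<or> L s = l \<and> D s c < y)}
      = Sigma {..<l} (class_values D c L A) \<union> {l} \<times> {z \<in> class_values D c L A l. z < y}"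
    by (auto simp: class_values_def)
  then show ?thesis
    using assms by (simp add: card_Un_disjoint card_cartesian_product_singleton disjoint_iff)
qed

lemma ranking_snoc:
  assumes L: "\<forall>s<m. L s = ranking D m bs s" and r: "r < m"
  shows "ranking D m (bs @ [c]) r = L r + (\<Sum>l<L r. card (class_values D c L {..<m} l) - 1)
           + card {y \<in> class_values D c L {..<m} (L r). y < D r c}"
proof -
  let ?row = "sub_row D (bs @ [c])"
  let ?S = "class_values D c L {..<m}"
  define T where "T = {s. s < m \<and> (L s < L r \<or> L s = L r \<and> D s c < D r c)}"
  have row: "?row s = sub_row D bs s @ [D s c]" for s
    by (simp add: sub_row_def)
  have less: "?row s < ?row r \<longleftrightarrow> L s < L r \<or> L s = L r \<and> D s c < D r c" if "s < m" for s
    using L r that by (simp add: row snoc_less_snoc_iff ranking_less_iff ranking_eq_iff)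
  have eq: "?row s = ?row s' \<longleftrightarrow> (L s, D s c) = (L s', D s' c)" if "s < m" "s' < m" for s s'
    using L that by (simp add: row ranking_eq_iff)
  have "{u \<in> ?row ` {..<m}. u < ?row r} = ?row ` T"
    using less by (auto simp: T_def)
  then have "ranking D m (bs @ [c]) r = card (?row ` T)"
    by (simp add: ranking_eq_card_less)
  also have "\<dots> = card ((\<lambda>s. (L s, D s c)) ` T)"
    by (rule card_image_eq_if_same_kernel) (simp add: T_def eq)
  also have "(\<lambda>s. (L s, D s c)) ` T
      = {(L s, D s c) |s. s \<in> {..<m} \<and> (L s < L r \<or> L s = L r \<and> D s c < D r c)}"
    by (auto simp: T_def)
  also have "card \<dots> = (\<Sum>l<L r. card (?S l)) + card {y \<in> ?S (L r). y < D r c}"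
    by (rule card_lex_pairs_below) simp
  also have "(\<Sum>l<L r. card (?S l)) = (\<Sum>l<L r. card (?S l) - 1 + 1)"
  proof (rule sum.cong)
    fix l assume "l \<in> {..<L r}"
    then obtain s where "s < m" "L s = l"
      using ex_ranking_eq_if_less[of r m l D bs] L r by auto
    then have "?S l \<noteq> {}"
      by (auto simp: class_values_def)
    then show "card (?S l) = card (?S l) - 1 + 1"
      by (simp add: card_gt_0_iff)
  qed simp
  also have "\<dots> = (\<Sum>l<L r. card (?S l) - 1) + L r"
    by (subst sum.distrib) simp
  finally show ?thesis
    by simp
qed

section \<open>The loop of QuickLexSortRefine\<close>

lemma fold_backward_differences:
  fixes d :: "nat \<Rightarrow> nat"
  assumes "l \<le> M"
  shows "fold (\<lambda>j nn. nn(j := nn (j + 1) - d j)) (rev [1..<M]) ((\<lambda>_. 0)(M := (\<Sum>j<M. d j))) l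
         = (\<Sum>j<l. d j)"
proof -
  define nn where "nn k = foldr (\<lambda>j nn. nn(j := nn (j + 1) - d j)) [k..<M] ((\<lambda>_. 0)(M := (\<Sum>j<M. d j)))"
    for k
  have nn_Suc: "nn k l = (if l = k then nn (Suc k) (Suc k) - d k else nn (Suc k) l)" if "k < M" for k l
    using that by (simp add: nn_def upt_conv_Cons)
  have "nn k l = (if k \<le> l \<and> l \<le> M then \<Sum>j<l. d j else 0)" if "k \<le> M" for k l
    using that
  proof (induction k arbitrary: l rule: inc_induct)
    case base
    then show ?case
      by (simp add: nn_def)
  next
    case (step k)
    then show ?case
      using step.IH[of l] step.IH[of "Suc k"] by (auto simp: nn_Suc le_Suc_eq)
  qed
  moreover have "[1..<M] = [min 1 M..<M]"
    by (cases M) auto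
  ultimately show ?thesis
    using assms by (cases l) (simp_all add: nn_def foldr_conv_fold[symmetric])
qed

lemma quick_lex_sort_refine_eq:
  assumes "fold (qlsr_step D Q i L) [0..<m] (\<lambda>_. 0, \<lambda>_. 0, \<lambda>_. 0, \<lambda>_. 0) = (idval, init, nc, sub)"
    and "L r < m"
  shows "quick_lex_sort_refine D Q m i L r = L r + (\<Sum>l<L r. nc l) + sub r"
  using assms fold_backward_differences[of "L r" "m - 1" nc]
  by (simp add: quick_lex_sort_refine_def Let_def)

text \<open>The state (IDval, IDvalInit, newCount, subID) after the rows A have been scanned.\<close>

definition qlsr_invariant ::
  "(nat \<Rightarrow> nat \<Rightarrow> real) \<Rightarrow> nat \<Rightarrow> (nat \<Rightarrow> nat) \<Rightarrow> nat set \<Rightarrow>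
   (nat \<Rightarrow> real) \<times> (nat \<Rightarrow> nat) \<times> (nat \<Rightarrow> nat) \<times> (nat \<Rightarrow> nat) \<Rightarrow> bool" where
  "qlsr_invariant D i L A st \<longleftrightarrow> (case st of (idval, init, nc, sub) \<Rightarrow>
     let S = class_values D i L A in
     (\<forall>l. init l = 0 \<longleftrightarrow> S l = {}) \<and> (\<forall>l. S l \<noteq> {} \<longrightarrow> idval l = Max (S l)) \<and>
     (\<forall>l. nc l = card (S l) - 1) \<and> (\<forall>q\<in>A. sub q = card {y \<in> S (L q). y < D q i}))"

lemma qlsr_invariant_insert:
  assumes inv: "qlsr_invariant D i L A (idval, init, nc, sub)"
    and fin: "finite A" and new: "r \<notin> A" and sorted: "\<forall>s\<in>A. D s i \<le> D r i" and "k \<noteq> 0"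
  shows "qlsr_invariant D i L (insert r A)
     (idval(L r := D r i), init(L r := k),
      nc(L r := card (insert (D r i) (class_values D i L A (L r))) - 1),
      sub(r := card {y \<in> class_values D i L A (L r). y < D r i}))"
proof -
  let ?S = "class_values D i L A"
  have I: "\<forall>l. init l = 0 \<longleftrightarrow> ?S l = {}" "\<forall>l. ?S l \<noteq> {} \<longrightarrow> idval l = Max (?S l)"
    "\<forall>l. nc l = card (?S l) - 1" "\<forall>q\<in>A. sub q = card {y \<in> ?S (L q). y < D q i}"
    using inv by (simp_all add: qlsr_invariant_def Let_def)
  have S': "class_values D i L (insert r A) = ?S(L r := insert (D r i) (?S (L r)))"
    by (rule class_values_insert)
  have Max: "Max (insert (D r i) (?S (L r))) = D r i"
    using fin sorted by (intro Max_eqI) (auto simp: class_values_def)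
  have below: "{y \<in> insert (D r i) X. y < x} = {y \<in> X. y < x}" if "x \<le> D r i" for X x
    using that by auto
  show ?thesis
    unfolding qlsr_invariant_def Let_def prod.case S'
    using I Max below new sorted \<open>k \<noteq> 0\<close> by (auto simp del: insert_iff)
qed

lemma qlsr_step_update:
  assumes inv: "qlsr_invariant D i L A (idval, init, nc, sub)" and fin: "finite A"
    and r: "r = Q j i" and below: "\<forall>y\<in>class_values D i L A (L r). y \<le> D r i"
  obtains k where "k \<noteq> 0" and "qlsr_step D Q i L j (idval, init, nc, sub) =
    (idval(L r := D r i), init(L r := k),
     nc(L r := card (insert (D r i) (class_values D i L A (L r))) - 1),
     sub(r := card {y \<in> class_values D i L A (L r). y < D r i}))"
proof -
  define a where "a = D r i"
  let ?S = "class_values D i L A (L r)"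
  have I: "init (L r) = 0 \<longleftrightarrow> ?S = {}" "?S \<noteq> {} \<Longrightarrow> idval (L r) = Max ?S" "nc (L r) = card ?S - 1"
    using inv by (simp_all add: qlsr_invariant_def Let_def)
  have fin_S: "finite ?S"
    using fin by simp
  have "\<exists>k. k \<noteq> 0 \<and> qlsr_step D Q i L j (idval, init, nc, sub) =
      (idval(L r := a), init(L r := k), nc(L r := card (insert a ?S) - 1), sub(r := card {y \<in> ?S. y < a}))"
  proof (cases "init (L r) = 0")
    case True
    then show ?thesis
      using I by (intro exI[of _ 1]) (auto simp: qlsr_step_def r[symmetric] a_def[symmetric] Let_def)
  next
    case nonempty: False
    then have ne: "?S \<noteq> {}"
      using I by simp
    show ?thesis
    proof (cases "idval (L r) = a")
      case True
      then have "a \<in> ?S"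
        using I(2) ne Max_in[OF fin_S] by simp
      moreover have "{y \<in> ?S. y < a} = ?S - {a}"
        using below by (auto simp: a_def order_less_le)
      ultimately have "card {y \<in> ?S. y < a} = nc (L r)"
        using I fin_S by simp
      moreover have "qlsr_step D Q i L j (idval, init, nc, sub) = (idval, init, nc, sub(r := nc (L r)))"
        using nonempty True by (simp add: qlsr_step_def r[symmetric] a_def[symmetric] Let_def)
      moreover have "nc(L r := card (insert a ?S) - 1) = nc"
        using I(3) \<open>a \<in> ?S\<close> by (intro fun_upd_idem) (simp add: insert_absorb)
      moreover have "idval(L r := a) = idval"
        using True by (rule fun_upd_idem)
      ultimately show ?thesis
        using nonempty by (intro exI[of _ "init (L r)"] conjI) (simp_all only: fun_upd_triv not_False_eq_True)
    next
      case False
      have "Max ?S \<le> a"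
        using below Max_in[OF fin_S ne] by (simp add: a_def)
      moreover have "Max ?S \<noteq> a"
        using I(2) ne False by simp
      ultimately have "Max ?S < a"
        by simp
      then have "\<forall>y\<in>?S. y < a"
        using Max_ge[OF fin_S] by (auto intro: le_less_trans)
      then have "a \<notin> ?S" "{y \<in> ?S. y < a} = ?S"
        by auto
      then show ?thesis
        using I nonempty False fin_S
        by (auto simp: qlsr_step_def r[symmetric] a_def[symmetric] Let_def card_gt_0_iff)
    qed
  qed
  then show ?thesis
    using that by (auto simp: a_def)
qed

lemma qlsr_step_invariant:
  assumes inv: "qlsr_invariant D i L A (idval, init, nc, sub)"
    and fin: "finite A" and new: "Q j i \<notin> A" and sorted: "\<forall>s\<in>A. D s i \<le> D (Q j i) i"
  shows "qlsr_invariant D i L (insert (Q j i) A) (qlsr_step D Q i L j (idval, init, nc, sub))"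
proof -
  have "\<forall>y\<in>class_values D i L A (L (Q j i)). y \<le> D (Q j i) i"
    using sorted by (auto simp: class_values_def)
  then obtain k where "k \<noteq> 0" and step: "qlsr_step D Q i L j (idval, init, nc, sub) =
      (idval(L (Q j i) := D (Q j i) i), init(L (Q j i) := k),
       nc(L (Q j i) := card (insert (D (Q j i) i) (class_values D i L A (L (Q j i)))) - 1),
       sub(Q j i := card {y \<in> class_values D i L A (L (Q j i)). y < D (Q j i) i}))"
    using qlsr_step_update[OF inv fin refl] by blast
  show ?thesis
    unfolding step using qlsr_invariant_insert[OF inv fin new sorted \<open>k \<noteq> 0\<close>] .
qed

lemma qlsr_fold_invariant:
  assumes inj: "inj_on (\<lambda>k. Q k i) {..<m}"
    and sorted: "\<forall>k. Suc k < m \<longrightarrow> D (Q k i) i \<le> D (Q (Suc k) i) i" and "j \<le> m"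
  shows "qlsr_invariant D i L ((\<lambda>k. Q k i) ` {..<j})
           (fold (qlsr_step D Q i L) [0..<j] (\<lambda>_. 0, \<lambda>_. 0, \<lambda>_. 0, \<lambda>_. 0))"
  using \<open>j \<le> m\<close>
proof (induction j)
  case 0
  show ?case
    by (simp add: qlsr_invariant_def class_values_def)
next
  case (Suc j)
  obtain idval init nc sub where st:
    "fold (qlsr_step D Q i L) [0..<j] (\<lambda>_. 0, \<lambda>_. 0, \<lambda>_. 0, \<lambda>_. 0) = (idval, init, nc, sub)"
    by (metis prod_cases4)
  have IH: "qlsr_invariant D i L ((\<lambda>k. Q k i) ` {..<j}) (idval, init, nc, sub)"
    using Suc by (simp add: st)
  have "Q k i \<noteq> Q j i" if "k < j" for k
    using inj_onD[OF inj, of k j] Suc.prems that by auto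
  then have "Q j i \<notin> (\<lambda>k. Q k i) ` {..<j}"
    by fastforce
  moreover have "D (Q k i) i \<le> D (Q j i) i" if "k < j" for k
  proof (rule lift_Suc_mono_le_ivl[where f = "\<lambda>k. D (Q k i) i" and N = "{n. Suc n < m}"])
    show "D (Q n i) i \<le> D (Q (Suc n) i) i" if "n \<in> {n. Suc n < m}" for n
      using sorted that by simp
    show "{k..<j} \<subseteq> {n. Suc n < m}"
      using Suc.prems by auto
  qed (use that in simp)
  ultimately have "qlsr_invariant D i L (insert (Q j i) ((\<lambda>k. Q k i) ` {..<j}))
      (qlsr_step D Q i L j (idval, init, nc, sub))"
    by (intro qlsr_step_invariant[OF IH]) auto
  then show ?case
    by (simp add: st lessThan_Suc)
qed

theorem mainTheorem2:
  fixes D :: "nat \<Rightarrow> nat \<Rightarrow> real" and Q :: "nat \<Rightarrow> nat \<Rightarrow> nat"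
    and m n i :: nat and as :: "nat list" and L :: "nat \<Rightarrow> nat"
  assumes "sorts_columns D Q m n"
    and "\<forall>a\<in>set as. a < n"
    and "\<forall>r<m. L r = ranking D m as r"
    and "i < n"
  shows "\<forall>r<m. quick_lex_sort_refine D Q m i L r = ranking D m (as @ [i]) r"
proof (intro allI impI)
  fix r assume r: "r < m"
  have bij: "bij_betw (\<lambda>k. Q k i) {..<m} {..<m}"
    and sorted: "\<forall>k. Suc k < m \<longrightarrow> D (Q k i) i \<le> D (Q (Suc k) i) i"
    using assms(1,4) by (auto simp: sorts_columns_def)
  obtain idval init nc sub where st:
    "fold (qlsr_step D Q i L) [0..<m] (\<lambda>_. 0, \<lambda>_. 0, \<lambda>_. 0, \<lambda>_. 0) = (idval, init, nc, sub)"
    by (metis prod_cases4)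
  have "qlsr_invariant D i L {..<m} (idval, init, nc, sub)"
    using qlsr_fold_invariant[where Q = Q and i = i and D = D and m = m and j = m and L = L] bij sorted st
    by (simp add: bij_betw_def)
  then have "nc l = card (class_values D i L {..<m} l) - 1"
    and "sub r = card {y \<in> class_values D i L {..<m} (L r). y < D r i}" for l
    using r by (simp_all add: qlsr_invariant_def Let_def)
  moreover have "L r < m"
    using ranking_less assms(3) r by simp
  ultimately show "quick_lex_sort_refine D Q m i L r = ranking D m (as @ [i]) r"
    using quick_lex_sort_refine_eq[OF st] ranking_snoc[OF assms(3) r] by simp
qed

end
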